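(* Let $f\in\mathbb{R}[x,y]$ and $p=(x_0,y_0)$ with $f(p)=0$ and $\frac{\partial f}{\partial y}(p)\neq0$, and let $g:I\to J$ be the differentiable function on open intervals $I\ni x_0$, $J\ni y_0$ with $g(x_0)=y_0$ and $\{(x,y)\in I\times J: f(x,y)=0\}=\{(x,g(x)):x\in I\}$. Let $[a,b]\subseteq I$ be a closed bounded interval and suppose $g$ is not a linear function. Then $g$ has only finitely many inflection points and local minimum points in $[a,b]$. *)

theory Defs
  imports "HOL-Analysis.Analysis"
begin

definition bipoly_eval :: "(nat \<Rightarrow> nat \<Rightarrow> real) \<Rightarrow> nat \<Rightarrow> real \<Rightarrow> real \<Rightarrow> real" where
  "bipoly_eval c n x y = (\<Sum>i\<le>n. \<Sum>j\<le>n. c i j * x ^ i * y ^ j)"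

definition inflection_point :: "(real \<Rightarrow> real) \<Rightarrow> real set \<Rightarrow> real \<Rightarrow> bool" where
  "inflection_point g I x0 \<longleftrightarrow> (\<exists>d>0. {x0 - d..x0 + d} \<subseteq> I \<and>
     ((convex_on {x0 - d..x0} g \<and> concave_on {x0..x0 + d} g) \<or>
      (concave_on {x0 - d..x0} g \<and> convex_on {x0..x0 + d} g)))"

definition local_min_point :: "(real \<Rightarrow> real) \<Rightarrow> real set \<Rightarrow> real \<Rightarrow> bool" where
  "local_min_point g I x0 \<longleftrightarrow> x0 \<in> I \<and> (\<exists>d>0. \<forall>x\<in>I. \<bar>x - x0\<bar> < d \<longrightarrow> g x0 \<le> g x)"

end

theory Submission
  imports Defs "HOL-Computational_Algebra.Polynomial_Factorial" "HOL-Computational_Algebra.Field_as_Ring"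
begin

(* Factor f into primes P of R[x][y].  Off a finite set of x, exactly one factor P vanishes
   at (x, g x), and it does so with nonzero y-derivative, so near x the graph of g is the
   nonsingular branch P = 0 and implicit differentiation gives g' = - P_x / P_y and
   g'' = - N / P_y^3 for a polynomial N.  The exceptional x are common zeros, along g, of P and
   a polynomial Q that P does not divide; a Bezout identity A P + B Q = D(x) with D nonzero
   shows that there are only finitely many of them.  At any other x, a local minimum forces
   P_x = 0 and an inflection point forces N = 0 (otherwise g'' keeps a strict sign near x), so
   P divides P_x or N and g' resp. g'' vanishes identically near x.  Then g is affine on an
   interval, and since f is a polynomial and the graph is connected, g is affine on all of I. *)

section \<open>A Bezout identity for bivariate polynomials\<close>

lemma coprime_field_poly_bezout:
  fixes p q :: "'k::field poly"
  assumes "coprime p q"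
  shows "\<exists>a b. a * p + b * q = 1"
  using assms
proof (induction q arbitrary: p rule: measure_induct_rule[where f = degree])
  case (less q p)
  consider "q = 0" | "q dvd p" | "q \<noteq> 0" "\<not> q dvd p" by blast
  then show ?case
  proof cases
    case 1
    then have "is_unit p" using less.prems by simp
    then obtain r where "1 = p * r" by (rule dvdE)
    then show ?thesis by (intro exI[of _ r] exI[of _ 0]) (simp add: mult.commute)
  next
    case 2
    then have "is_unit q" using less.prems by (auto intro: coprime_common_divisor)
    then obtain s where "1 = q * s" by (rule dvdE)
    then show ?thesis by (intro exI[of _ 0] exI[of _ s]) (simp add: mult.commute)
  next
    case 3
    then have "degree (p mod q) < degree q" by (rule degree_mod_less_degree)
    moreover have "coprime q (p mod q)" using less.prems 3 by (simp add: coprime_commute)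
    ultimately obtain a b where ab: "a * q + b * (p mod q) = 1" using less.IH by blast
    have "b * p + (a - b * (p div q)) * q = 1"
      using ab by (simp add: algebra_simps minus_div_mult_eq_mod[symmetric])
    then show ?thesis by blast
  qed
qed

lemma fract_poly_clear_denominators:
  fixes a :: "'a::{factorial_semiring,semiring_Gcd,ring_gcd,idom_divide,semiring_gcd_mult_normalize} fract poly"
  obtains c A where "c \<noteq> 0" "smult (to_fract c) a = fract_poly A"
proof -
  obtain u v where uv: "fract_content a = Fract u v" "v \<noteq> 0" by (cases "fract_content a") auto
  have "smult (to_fract v) a = smult (to_fract v) (smult (fract_content a) (fract_poly (primitive_part_fract a)))"
    by (simp add: content_times_primitive_part_fract)
  also have "\<dots> = fract_poly (smult u (primitive_part_fract a))"
    using uv by (simp add: Fract_conv_to_fract)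
  finally show ?thesis using uv(2) that by blast
qed

text \<open>Over the field of fractions the irreducible \<open>P\<close> is coprime to \<open>Q\<close>; clearing
  denominators turns the Bezout identity there into one with a nonzero right-hand side in the
  coefficient ring.\<close>

lemma irreducible_poly_bezout_const:
  fixes P Q :: "'k::field_gcd poly poly"
  assumes irr: "irreducible P" and ndvd: "\<not> P dvd Q"
  obtains A B D where "A * P + B * Q = [:D:]" "D \<noteq> 0"
proof (cases "degree P = 0")
  case True
  then obtain D where "P = [:D:]" by (rule degree_eq_zeroE)
  moreover have "P \<noteq> 0" using irr by auto
  ultimately show ?thesis using that[of 1 0 D] by simp
next
  case deg: False
  from irr deg have irr': "irreducible (fract_poly P)" and cont: "content P = 1"
    by (simp_all add: nonconst_poly_irreducible_iff)
  have "coprime (fract_poly P) (fract_poly Q)"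
  proof (rule coprimeI)
    fix d assume d: "d dvd fract_poly P" "d dvd fract_poly Q"
    from d(1) obtain e where e: "fract_poly P = d * e" by (rule dvdE)
    have "\<not> is_unit e"
    proof
      assume "is_unit e"
      then have "fract_poly P dvd fract_poly Q" using d(2) e by (simp add: mult_unit_dvd_iff)
      then show False using ndvd fract_poly_dvdD[OF _ cont] by blast
    qed
    then show "is_unit d" using irreducibleD[OF irr' e] by blast
  qed
  then obtain a b where ab: "a * fract_poly P + b * fract_poly Q = 1"
    using coprime_field_poly_bezout by blast
  obtain ca A where A: "ca \<noteq> 0" "smult (to_fract ca) a = fract_poly A"
    by (rule fract_poly_clear_denominators)
  obtain cb B where B: "cb \<noteq> 0" "smult (to_fract cb) b = fract_poly B"
    by (rule fract_poly_clear_denominators)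
  have "fract_poly (smult cb A * P + smult ca B * Q)
      = smult (to_fract ca * to_fract cb) (a * fract_poly P + b * fract_poly Q)"
    by (simp add: A(2)[symmetric] B(2)[symmetric] smult_add_right mult.commute)
  also have "\<dots> = fract_poly [:ca * cb:]" by (simp add: ab map_poly_pCons)
  finally have "smult cb A * P + smult ca B * Q = [:ca * cb:]" by (simp only: fract_poly_eq_iff)
  then show ?thesis using that[of "smult cb A" "smult ca B" "ca * cb"] A(1) B(1) by simp
qed

section \<open>Bivariate polynomials as functions\<close>

text \<open>A bivariate polynomial is a polynomial in \<open>y\<close> with coefficients in \<open>x\<close>, so
  \<^const>\<open>pderiv\<close> is the partial derivative in \<open>y\<close> and \<open>map_poly pderiv\<close> the one in \<open>x\<close>.\<close>

definition poly2 :: "'a::comm_semiring_1 poly poly \<Rightarrow> 'a \<Rightarrow> 'a \<Rightarrow> 'a" where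
  "poly2 P x y = poly (poly P [:y:]) x"

definition pderiv_x :: "'a::{comm_semiring_1,semiring_no_zero_divisors} poly poly \<Rightarrow> 'a poly poly" where
  "pderiv_x P = map_poly pderiv P"

lemma poly2_0 [simp]: "poly2 0 x y = 0"
  and poly2_1 [simp]: "poly2 1 x y = 1"
  and poly2_const [simp]: "poly2 [:a:] x y = poly a x"
  and poly2_add [simp]: "poly2 (P + Q) x y = poly2 P x y + poly2 Q x y"
  and poly2_mult [simp]: "poly2 (P * Q) x y = poly2 P x y * poly2 Q x y"
  and poly2_pCons: "poly2 (pCons a P) x y = poly a x + y * poly2 P x y"
  by (simp_all add: poly2_def)

lemma poly2_diff [simp]: "poly2 (P - Q) x y = poly2 P x y - poly2 Q x y"
  for P Q :: "'a::comm_ring_1 poly poly"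
  by (simp add: poly2_def)

lemma poly2_sum: "poly2 (sum f A) x y = (\<Sum>a\<in>A. poly2 (f a) x y)"
  by (induction A rule: infinite_finite_induct) auto

lemma poly2_prod_mset_eq_0: "poly2 (prod_mset M) x y = 0 \<Longrightarrow> \<exists>P\<in>#M. poly2 P x y = 0"
  for M :: "'a::{comm_semiring_1,semiring_no_zero_divisors} poly poly multiset"
  by (induction M) auto

lemma poly2_eq_0_if_dvd: "P dvd Q \<Longrightarrow> poly2 P x y = 0 \<Longrightarrow> poly2 Q x y = 0"
  by (elim dvdE) simp

lemma poly_poly_eq_poly2: "poly (poly P q) t = poly2 P t (poly q t)"
  by (induction P) (auto simp: poly2_pCons)

definition bipoly :: "(nat \<Rightarrow> nat \<Rightarrow> real) \<Rightarrow> nat \<Rightarrow> real poly poly" where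
  "bipoly c n = (\<Sum>i\<le>n. \<Sum>j\<le>n. monom (monom (c i j) i) j)"

lemma bipoly_eval_eq_poly2: "bipoly_eval c n x y = poly2 (bipoly c n) x y"
  by (simp add: bipoly_eval_def bipoly_def poly2_sum) (simp add: poly2_def poly_monom mult.assoc)

lemma finite_common_zeros_along:
  fixes P Q :: "'k::field_gcd poly poly" and h :: "'k \<Rightarrow> 'k"
  assumes "irreducible P" "\<not> P dvd Q"
  shows "finite {x. poly2 P x (h x) = 0 \<and> poly2 Q x (h x) = 0}"
proof -
  obtain A B D where ABD: "A * P + B * Q = [:D:]" "D \<noteq> 0"
    using irreducible_poly_bezout_const[OF assms] .
  have "poly D x = 0" if "poly2 P x (h x) = 0" "poly2 Q x (h x) = 0" for x
    using arg_cong[OF ABD(1), of "\<lambda>R. poly2 R x (h x)"] that by simp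
  then have "{x. poly2 P x (h x) = 0 \<and> poly2 Q x (h x) = 0} \<subseteq> {x. poly D x = 0}" by blast
  then show ?thesis using poly_roots_finite[OF ABD(2)] finite_subset by blast
qed

section \<open>Implicit differentiation\<close>

lemma has_real_derivative_poly2_comp:
  assumes "(h has_real_derivative h') (at t)"
  shows "((\<lambda>s. poly2 P s (h s)) has_real_derivative
           poly2 (pderiv_x P) t (h t) + poly2 (pderiv P) t (h t) * h') (at t)"
proof (induction P)
  case (pCons a P)
  have "((\<lambda>s. poly a s + h s * poly2 P s (h s)) has_real_derivative
      poly (pderiv a) t + (h' * poly2 P t (h t)
        + (poly2 (pderiv_x P) t (h t) + poly2 (pderiv P) t (h t) * h') * h t)) (at t)"
    by (intro DERIV_add poly_DERIV DERIV_mult assms pCons.IH)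
  then show ?case
    using pCons.hyps
    by (simp add: poly2_pCons pderiv_x_def map_poly_pCons pderiv_pCons algebra_simps)
qed (simp add: pderiv_x_def)

text \<open>The numerator of \<open>g''\<close> for a branch of \<open>P = 0\<close>, namely
  \<open>P\<^sub>x\<^sub>x P\<^sub>y\<^sup>2 - 2 P\<^sub>x\<^sub>y P\<^sub>x P\<^sub>y + P\<^sub>y\<^sub>y P\<^sub>x\<^sup>2\<close>, with the mixed
  derivative written in both orders as it arises from the quotient rule.\<close>

definition implicit_deriv2_numer :: "real poly poly \<Rightarrow> real poly poly" where
  "implicit_deriv2_numer P =
     pderiv_x (pderiv_x P) * pderiv P * pderiv P - pderiv (pderiv_x P) * pderiv_x P * pderiv P
     - pderiv_x P * pderiv_x (pderiv P) * pderiv P + pderiv_x P * pderiv (pderiv P) * pderiv_x P"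

definition nonsingular_branch :: "real poly poly \<Rightarrow> (real \<Rightarrow> real) \<Rightarrow> real set \<Rightarrow> bool" where
  "nonsingular_branch P g B \<longleftrightarrow> open B \<and> g differentiable_on B \<and>
     (\<forall>t\<in>B. poly2 P t (g t) = 0 \<and> poly2 (pderiv P) t (g t) \<noteq> 0)"

lemma differentiable_on_open_has_deriv:
  "g differentiable_on B \<Longrightarrow> open B \<Longrightarrow> t \<in> B \<Longrightarrow> (g has_real_derivative deriv g t) (at t)"
  by (simp add: differentiable_on_eq_differentiable_at DERIV_deriv_iff_real_differentiable)

lemma nonsingular_branch_has_deriv:
  "nonsingular_branch P g B \<Longrightarrow> t \<in> B \<Longrightarrow> (g has_real_derivative deriv g t) (at t)"
  unfolding nonsingular_branch_def by (blast intro: differentiable_on_open_has_deriv)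

lemma nonsingular_branch_deriv:
  assumes br: "nonsingular_branch P g B" and t: "t \<in> B"
  shows "deriv g t = - poly2 (pderiv_x P) t (g t) / poly2 (pderiv P) t (g t)"
proof -
  have "((\<lambda>s. poly2 P s (g s)) has_real_derivative
      poly2 (pderiv_x P) t (g t) + poly2 (pderiv P) t (g t) * deriv g t) (at t)"
    by (rule has_real_derivative_poly2_comp[OF nonsingular_branch_has_deriv[OF br t]])
  moreover have "((\<lambda>s. poly2 P s (g s)) has_real_derivative 0) (at t)"
    using br t unfolding nonsingular_branch_def
    by (intro has_field_derivative_transform_within_open[OF DERIV_const[of 0], of B]) auto
  ultimately have "poly2 (pderiv_x P) t (g t) + poly2 (pderiv P) t (g t) * deriv g t = 0"
    by (rule DERIV_unique)
  moreover have "poly2 (pderiv P) t (g t) \<noteq> 0" using br t unfolding nonsingular_branch_def by blast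
  ultimately show ?thesis by (simp add: field_simps add_eq_0_iff)
qed

lemma nonsingular_branch_deriv2:
  assumes br: "nonsingular_branch P g B" and t: "t \<in> B"
  shows "(deriv g has_real_derivative
           - poly2 (implicit_deriv2_numer P) t (g t) / poly2 (pderiv P) t (g t) ^ 3) (at t)"
proof -
  define E1 where "E1 s = poly2 (pderiv_x P) s (g s)" for s
  define E2 where "E2 s = poly2 (pderiv P) s (g s)" for s
  define D1 where "D1 = poly2 (pderiv_x (pderiv_x P)) t (g t) + poly2 (pderiv (pderiv_x P)) t (g t) * deriv g t"
  define D2 where "D2 = poly2 (pderiv_x (pderiv P)) t (g t) + poly2 (pderiv (pderiv P)) t (g t) * deriv g t"
  have nz: "E2 t \<noteq> 0" using br t unfolding E2_def nonsingular_branch_def by blast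
  have "((\<lambda>s. - (E1 s / E2 s)) has_real_derivative - ((D1 * E2 t - E1 t * D2) / (E2 t * E2 t))) (at t)"
    unfolding E1_def E2_def D1_def D2_def
    by (intro DERIV_minus DERIV_divide has_real_derivative_poly2_comp
        nonsingular_branch_has_deriv[OF br t] nz[unfolded E2_def])
  then have "(deriv g has_real_derivative - ((D1 * E2 t - E1 t * D2) / (E2 t * E2 t))) (at t)"
    using br t nonsingular_branch_deriv[OF br] unfolding nonsingular_branch_def E1_def E2_def
    by (elim has_field_derivative_transform_within_open) auto
  moreover have gt: "deriv g t = - E1 t / E2 t"
    using nonsingular_branch_deriv[OF br t] unfolding E1_def E2_def .
  have "- ((D1 * E2 t - E1 t * D2) / (E2 t * E2 t))
      = - poly2 (implicit_deriv2_numer P) t (g t) / poly2 (pderiv P) t (g t) ^ 3"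
    unfolding D1_def D2_def gt implicit_deriv2_numer_def using nz unfolding E1_def E2_def
    by (simp add: field_simps power3_eq_cube)
  ultimately show ?thesis by simp
qed

section \<open>Convexity near a point\<close>

lemma concave_on_subset: "concave_on T f \<Longrightarrow> S \<subseteq> T \<Longrightarrow> convex S \<Longrightarrow> concave_on S f"
  unfolding concave_on_def by (rule convex_on_subset)

lemma convex_concave_on_imp_affine:
  fixes g :: "real \<Rightarrow> real"
  assumes cv: "convex_on {u..v} g" and cc: "concave_on {u..v} g"
  shows "\<exists>m k. \<forall>t\<in>{u..v}. g t = m * t + k"
proof (cases "u < v")
  case uv: True
  define m where "m = (g v - g u) / (v - u)"
  have "g t = m * t + (g u - m * u)" if t: "t \<in> {u..v}" for t
  proof -
    define \<theta> where "\<theta> = (t - u) / (v - u)"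
    have \<theta>: "0 \<le> \<theta>" "\<theta> \<le> 1" using t uv unfolding \<theta>_def by (auto simp: field_simps)
    have "\<theta> * (v - u) = t - u" using uv unfolding \<theta>_def by simp
    then have "t = (1 - \<theta>) *\<^sub>R u + \<theta> *\<^sub>R v" by (simp add: algebra_simps)
    moreover have "u \<in> {u..v}" "v \<in> {u..v}" using uv by auto
    ultimately have "g t = (1 - \<theta>) * g u + \<theta> * g v"
      using convex_onD[OF cv \<theta>] concave_onD[OF cc \<theta>] by (simp add: order_antisym)
    then show ?thesis using uv unfolding \<theta>_def m_def by (simp add: field_simps)
  qed
  then show ?thesis by blast
next
  case False
  then have "{u..v} \<subseteq> {u}" by auto
  then have "\<forall>t\<in>{u..v}. g t = 0 * t + g u" by auto
  then show ?thesis by blast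
qed

lemma convex_or_concave_near_nonzero_deriv2:
  fixes g g' g'' :: "real \<Rightarrow> real"
  assumes e: "e > 0"
    and d1: "\<And>t. t \<in> ball x e \<Longrightarrow> (g has_real_derivative g' t) (at t)"
    and d2: "\<And>t. t \<in> ball x e \<Longrightarrow> (g' has_real_derivative g'' t) (at t)"
    and cont: "isCont g'' x" and nz: "g'' x \<noteq> 0"
  obtains r where "r > 0" "convex_on {x - r..x + r} g \<or> concave_on {x - r..x + r} g"
proof -
  have "eventually (\<lambda>t. g'' t * g'' x > 0) (nhds x)"
  proof -
    have "g'' x * g'' x > 0" using nz by (auto simp: zero_less_mult_iff linorder_neq_iff)
    moreover have "isCont (\<lambda>t. g'' t * g'' x) x" using cont by (intro continuous_intros)
    ultimately show ?thesis
      using order_tendstoD(1)[OF isContD] by (auto simp: eventually_nhds_conv_at)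
  qed
  moreover have "eventually (\<lambda>t. t \<in> ball x e) (nhds x)" using e by (rule eventually_nhds_ball)
  ultimately have "eventually (\<lambda>t. g'' t * g'' x > 0 \<and> t \<in> ball x e) (nhds x)"
    by (rule eventually_conj)
  then obtain r0 where r0: "r0 > 0" "\<And>t. dist t x < r0 \<Longrightarrow> g'' t * g'' x > 0 \<and> t \<in> ball x e"
    unfolding eventually_nhds_metric by blast
  define C where "C = {x - r0 / 2..x + r0 / 2}"
  have C: "g'' t * g'' x > 0" "t \<in> ball x e" if "t \<in> C" for t
    using r0 that unfolding C_def by (auto simp: dist_real_def)
  have "convex_on C g \<or> concave_on C g"
  proof (cases "g'' x > 0")
    case True
    have "convex_on C g"
    proof (rule f''_ge0_imp_convex)
      fix t assume t: "t \<in> C"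
      show "(g has_real_derivative g' t) (at t)" "(g' has_real_derivative g'' t) (at t)"
        using C(2)[OF t] d1 d2 by simp_all
      show "g'' t \<ge> 0" using C(1)[OF t] True nz by (auto simp: zero_less_mult_iff)
    qed (simp add: C_def)
    then show ?thesis ..
  next
    case False
    have "concave_on C g"
    proof (rule f''_le0_imp_concave)
      fix t assume t: "t \<in> C"
      show "(g has_real_derivative g' t) (at t)" "(g' has_real_derivative g'' t) (at t)"
        using C(2)[OF t] d1 d2 by simp_all
      show "g'' t \<le> 0" using C(1)[OF t] False nz by (auto simp: zero_less_mult_iff)
    qed (simp add: C_def)
    then show ?thesis ..
  qed
  then show ?thesis using that[of "r0 / 2"] r0(1) unfolding C_def by simp
qed

lemma inflection_point_imp_affine_segment:
  fixes g :: "real \<Rightarrow> real"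
  assumes infl: "inflection_point g I x" and r: "r > 0"
    and near: "convex_on {x - r..x + r} g \<or> concave_on {x - r..x + r} g"
  obtains u v m k where "u < v" "{u..v} \<subseteq> I" "\<forall>t\<in>{u..v}. g t = m * t + k"
proof -
  obtain d where d: "d > 0" "{x - d..x + d} \<subseteq> I"
    and sides: "(convex_on {x - d..x} g \<and> concave_on {x..x + d} g) \<or>
                (concave_on {x - d..x} g \<and> convex_on {x..x + d} g)"
    using infl unfolding inflection_point_def by blast
  define s where "s = min d r"
  have s: "s > 0" using d r by (simp add: s_def)
  have L: "{x - s..x} \<subseteq> {x - d..x}" "{x - s..x} \<subseteq> {x - r..x + r}"
    and R: "{x..x + s} \<subseteq> {x..x + d}" "{x..x + s} \<subseteq> {x - r..x + r}"
    by (auto simp: s_def)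
  have Ls: "convex_on {x - s..x} g" if "convex_on A g" "{x - s..x} \<subseteq> A" for A
    using convex_on_subset[OF that] by simp
  have Lc: "concave_on {x - s..x} g" if "concave_on A g" "{x - s..x} \<subseteq> A" for A
    using concave_on_subset[OF that] by simp
  have Rs: "convex_on {x..x + s} g" if "convex_on A g" "{x..x + s} \<subseteq> A" for A
    using convex_on_subset[OF that] by simp
  have Rc: "concave_on {x..x + s} g" if "concave_on A g" "{x..x + s} \<subseteq> A" for A
    using concave_on_subset[OF that] by simp
  have "convex_on {x - s..x} g \<and> concave_on {x - s..x} g \<or>
        convex_on {x..x + s} g \<and> concave_on {x..x + s} g"
    using sides near Ls[OF _ L(1)] Ls[OF _ L(2)] Lc[OF _ L(1)] Lc[OF _ L(2)]
      Rs[OF _ R(1)] Rs[OF _ R(2)] Rc[OF _ R(1)] Rc[OF _ R(2)]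
    by blast
  then show ?thesis
  proof
    assume "convex_on {x - s..x} g \<and> concave_on {x - s..x} g"
    then obtain m k where "\<forall>t\<in>{x - s..x}. g t = m * t + k"
      using convex_concave_on_imp_affine by blast
    moreover have "{x - s..x} \<subseteq> I" using d L(1) by auto
    ultimately show ?thesis using that[of "x - s" x m k] s by simp
  next
    assume "convex_on {x..x + s} g \<and> concave_on {x..x + s} g"
    then obtain m k where "\<forall>t\<in>{x..x + s}. g t = m * t + k"
      using convex_concave_on_imp_affine by blast
    moreover have "{x..x + s} \<subseteq> I" using d R(1) by auto
    ultimately show ?thesis using that[of x "x + s" m k] s by simp
  qed
qed

lemma has_real_derivative_constant_imp_affine:
  fixes g :: "real \<Rightarrow> real"
  assumes "convex S" "\<And>t. t \<in> S \<Longrightarrow> (g has_real_derivative m) (at t)"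
  shows "\<exists>k. \<forall>t\<in>S. g t = m * t + k"
proof -
  have "\<exists>k. \<forall>t\<in>S. g t - m * t = k"
    using assms
    by (intro has_field_derivative_zero_constant)
       (auto intro!: derivative_eq_intros simp: has_field_derivative_at_within)
  then show ?thesis by (metis add_diff_cancel_left' diff_add_cancel)
qed

section \<open>The graph of an implicit function of a polynomial\<close>

locale polynomial_graph =
  fixes F :: "real poly poly" and I J :: "real set" and g :: "real \<Rightarrow> real"
  assumes F_nonzero: "F \<noteq> 0"
    and open_I: "open I" and interval_I: "is_interval I" and open_J: "open J"
    and g_in_J: "\<And>x. x \<in> I \<Longrightarrow> g x \<in> J"
    and differentiable_g: "g differentiable_on I"
    and zero_on_graph: "\<And>x. x \<in> I \<Longrightarrow> poly2 F x (g x) = 0"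
    and graph_unique: "\<And>x y. x \<in> I \<Longrightarrow> y \<in> J \<Longrightarrow> poly2 F x y = 0 \<Longrightarrow> y = g x"
    and not_affine: "\<not> (\<exists>m k. \<forall>x\<in>I. g x = m * x + k)"
begin

lemma isCont_poly2_graph: "x \<in> I \<Longrightarrow> isCont (\<lambda>t. poly2 Q t (g t)) x"
  by (rule DERIV_isCont[OF has_real_derivative_poly2_comp])
     (rule differentiable_on_open_has_deriv[OF differentiable_g open_I])

lemma eventually_poly2_graph_nonzero:
  "x \<in> I \<Longrightarrow> poly2 Q x (g x) \<noteq> 0 \<Longrightarrow> eventually (\<lambda>t. poly2 Q t (g t) \<noteq> 0) (nhds x)"
  using tendsto_imp_eventually_ne[OF isContD[OF isCont_poly2_graph]]
  by (auto simp: eventually_nhds_conv_at)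

text \<open>If \<open>g\<close> agreed with the line \<open>m t + k\<close> infinitely often, \<open>F\<close> would vanish on the whole
  line; the set of \<open>t \<in> I\<close> where the line stays in \<open>J\<close> is open, and by uniqueness of the
  graph it is also the closed set where \<open>g\<close> meets the line, so by connectedness it is \<open>I\<close>.\<close>

lemma finite_affine_agreement: "finite {t \<in> I. g t = m * t + k}"
proof (rule ccontr)
  assume inf: "infinite {t \<in> I. g t = m * t + k}"
  have "poly (poly F [:k, m:]) t = 0" if "t \<in> I" "g t = m * t + k" for t
    using zero_on_graph[OF that(1)] that(2) by (simp add: poly_poly_eq_poly2 algebra_simps)
  then have "{t \<in> I. g t = m * t + k} \<subseteq> {t. poly (poly F [:k, m:]) t = 0}" by blast
  then have "poly F [:k, m:] = 0" using inf poly_roots_finite finite_subset by blast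
  then have line: "poly2 F t (m * t + k) = 0" for t
    using poly_poly_eq_poly2[of F "[:k, m:]" t] by (simp add: algebra_simps)
  define S where "S = {t \<in> I. m * t + k \<in> J}"
  have S_eq: "S = {t \<in> I. g t - (m * t + k) = 0}"
    unfolding S_def using graph_unique line g_in_J by force
  have "open ((\<lambda>t. m * t + k) -` J)" by (intro open_vimage open_J continuous_intros)
  then have "openin (top_of_set I) (I \<inter> (\<lambda>t. m * t + k) -` J)" by (rule openin_open_Int)
  moreover have "I \<inter> (\<lambda>t. m * t + k) -` J = S" unfolding S_def by auto
  ultimately have "openin (top_of_set I) S" by simp
  moreover have "closedin (top_of_set I) S"
    using differentiable_g unfolding S_eq
    by (intro continuous_closedin_preimage_constant continuous_intros differentiable_imp_continuous_on)
  moreover have "{t \<in> I. g t = m * t + k} \<noteq> {}" using inf by (metis finite.emptyI)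
  then have "S \<noteq> {}" unfolding S_eq by auto
  ultimately have "S = I"
    using is_interval_connected[OF interval_I] unfolding connected_clopen by blast
  then show False using not_affine unfolding S_eq by auto
qed

lemma no_constant_deriv_on_ball:
  assumes "e > 0" "ball x e \<subseteq> I" "\<And>t. t \<in> ball x e \<Longrightarrow> (g has_real_derivative m) (at t)"
  shows False
proof -
  obtain k where "\<forall>t\<in>ball x e. g t = m * t + k"
    using has_real_derivative_constant_imp_affine[of "ball x e" g m] assms(3) by auto
  moreover have "{x - e / 2..x + e / 2} \<subseteq> ball x e" using assms(1) by (auto simp: dist_real_def)
  ultimately have "{x - e / 2..x + e / 2} \<subseteq> {t \<in> I. g t = m * t + k}" using assms(2) by blast
  moreover have "x - e / 2 < x + e / 2" using assms(1) by simp
  ultimately show False using finite_subset[OF _ finite_affine_agreement] infinite_Icc by blast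
qed

text \<open>A factor constant in \<open>y\<close> cannot vanish at a point of the graph: \<open>F\<close> would vanish on
  a whole vertical segment through it, contradicting uniqueness.\<close>

lemma degree_factor_vanishing_on_graph:
  assumes "P dvd F" "x \<in> I" "poly2 P x (g x) = 0"
  shows "degree P \<noteq> 0"
proof
  assume "degree P = 0"
  then obtain a where a: "P = [:a:]" by (rule degree_eq_zeroE)
  then have F0: "poly2 F x y = 0" for y
    using assms poly2_eq_0_if_dvd[OF assms(1)] by simp
  obtain e where "e > 0" "ball (g x) e \<subseteq> J"
    using open_J g_in_J[OF assms(2)] open_contains_ball by blast
  then have "g x + e / 2 \<in> J" by (auto simp: dist_real_def)
  then show False using graph_unique[OF assms(2) _ F0] \<open>e > 0\<close> by fastforce
qed

lemma prime_factor_vanishing_on_graph: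
  assumes "x \<in> I"
  obtains P where "P \<in> prime_factors F" "poly2 P x (g x) = 0"
proof -
  have "F dvd normalize (prod_mset (prime_factorization F))"
    by (simp add: prod_mset_prime_factorization_weak F_nonzero)
  then have "poly2 (prod_mset (prime_factorization F)) x (g x) = 0"
    using poly2_eq_0_if_dvd zero_on_graph[OF assms] by simp
  then show ?thesis using poly2_prod_mset_eq_0 that by blast
qed

lemma not_local_min_point:
  assumes br: "nonsingular_branch P g (ball x e)" and e: "e > 0" "ball x e \<subseteq> I"
    and Px: "P dvd pderiv_x P \<or> poly2 (pderiv_x P) x (g x) \<noteq> 0"
  shows "\<not> local_min_point g I x"
proof
  assume "local_min_point g I x"
  then obtain d where d: "d > 0" "\<forall>y\<in>I. \<bar>y - x\<bar> < d \<longrightarrow> g x \<le> g y"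
    unfolding local_min_point_def by blast
  have x: "x \<in> ball x e" using e by simp
  have "deriv g x = 0"
  proof (rule DERIV_local_min[OF nonsingular_branch_has_deriv[OF br x]])
    show "0 < min d e" using d e by simp
    show "\<forall>y. \<bar>x - y\<bar> < min d e \<longrightarrow> g x \<le> g y"
      using d e by (auto simp: dist_real_def subset_iff abs_minus_commute)
  qed
  then have "poly2 (pderiv_x P) x (g x) = 0"
    using nonsingular_branch_deriv[OF br x] br x unfolding nonsingular_branch_def by simp
  then have "P dvd pderiv_x P" using Px by blast
  have "deriv g t = 0" if "t \<in> ball x e" for t
  proof -
    have "poly2 P t (g t) = 0" using br that unfolding nonsingular_branch_def by blast
    then show ?thesis
      using nonsingular_branch_deriv[OF br that] poly2_eq_0_if_dvd[OF \<open>P dvd pderiv_x P\<close>] by simp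
  qed
  then show False
    using no_constant_deriv_on_ball[OF e] nonsingular_branch_has_deriv[OF br] by metis
qed

lemma not_inflection_point:
  assumes br: "nonsingular_branch P g (ball x e)" and e: "e > 0" "ball x e \<subseteq> I"
    and N: "P dvd implicit_deriv2_numer P \<or> poly2 (implicit_deriv2_numer P) x (g x) \<noteq> 0"
  shows "\<not> inflection_point g I x"
proof
  assume infl: "inflection_point g I x"
  define g'' where "g'' t = - poly2 (implicit_deriv2_numer P) t (g t) / poly2 (pderiv P) t (g t) ^ 3" for t
  have d2: "(deriv g has_real_derivative g'' t) (at t)" if "t \<in> ball x e" for t
    unfolding g''_def using nonsingular_branch_deriv2[OF br that] .
  show False
  proof (cases "P dvd implicit_deriv2_numer P")
    case True
    have "g'' t = 0" if "t \<in> ball x e" for t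
    proof -
      have "poly2 P t (g t) = 0" using br that unfolding nonsingular_branch_def by blast
      then show ?thesis using poly2_eq_0_if_dvd[OF True] unfolding g''_def by simp
    qed
    then obtain m where "\<forall>t\<in>ball x e. deriv g t = 0 * t + m"
      using has_real_derivative_constant_imp_affine[of "ball x e" "deriv g" 0] d2 by force
    then show False
      using no_constant_deriv_on_ball[OF e] nonsingular_branch_has_deriv[OF br] by (metis mult_zero_left add_0)
  next
    case False
    have x: "poly2 (pderiv P) x (g x) \<noteq> 0" using br e(1) unfolding nonsingular_branch_def by simp
    then have "isCont g'' x" unfolding g''_def using e by (intro continuous_intros isCont_poly2_graph) auto
    moreover have "g'' x \<noteq> 0" using N False x unfolding g''_def by simp
    ultimately obtain r where "r > 0" "convex_on {x - r..x + r} g \<or> concave_on {x - r..x + r} g"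
      using convex_or_concave_near_nonzero_deriv2[OF e(1) nonsingular_branch_has_deriv[OF br] d2] by blast
    then obtain u v m k where "u < v" "{u..v} \<subseteq> I" "\<forall>t\<in>{u..v}. g t = m * t + k"
      using inflection_point_imp_affine_segment[OF infl] by blast
    then have "{u..v} \<subseteq> {t \<in> I. g t = m * t + k}" by blast
    then show False using finite_subset[OF _ finite_affine_agreement] infinite_Icc[OF \<open>u < v\<close>] by blast
  qed
qed

text \<open>Away from the exceptional points, the prime factor \<open>P\<close> vanishing at \<open>(x, g x)\<close> is
  unique, has \<open>P\<^sub>y \<noteq> 0\<close> there, and \<open>P\<^sub>x\<close> or the numerator of \<open>g''\<close> vanish there only if
  \<open>P\<close> divides them.\<close>

definition companions :: "real poly poly \<Rightarrow> real poly poly set" where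
  "companions P = (prime_factors F - {P}) \<union> {pderiv P, pderiv_x P, implicit_deriv2_numer P}"

definition exceptional_points :: "real set" where
  "exceptional_points = (\<Union>P\<in>prime_factors F. \<Union>Q\<in>{Q \<in> companions P. \<not> P dvd Q}.
      {x. poly2 P x (g x) = 0 \<and> poly2 Q x (g x) = 0})"

lemma finite_exceptional_points: "finite exceptional_points"
proof -
  have "irreducible P" if "P \<in> prime_factors F" for P
    using that by (intro prime_elem_imp_irreducible prime_imp_prime_elem in_prime_factors_imp_prime)
  then show ?thesis unfolding exceptional_points_def companions_def
    by (intro finite_UN_I finite_common_zeros_along) auto
qed

lemma nonsingular_branch_near:
  assumes x: "x \<in> I"
    and others: "\<forall>Q\<in>prime_factors F - {P}. poly2 Q x (g x) \<noteq> 0"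
    and Py: "poly2 (pderiv P) x (g x) \<noteq> 0"
  obtains e where "e > 0" "ball x e \<subseteq> I" "nonsingular_branch P g (ball x e)"
proof -
  define A where "A = insert (pderiv P) (prime_factors F - {P})"
  have "eventually (\<lambda>t. t \<in> I \<and> (\<forall>Q\<in>A. poly2 Q t (g t) \<noteq> 0)) (nhds x)"
    using x open_I others Py
    by (intro eventually_conj eventually_nhds_in_open eventually_ball_finite)
       (auto simp: A_def intro: eventually_poly2_graph_nonzero)
  then obtain e where e: "e > 0" "\<And>t. t \<in> ball x e \<Longrightarrow> t \<in> I \<and> (\<forall>Q\<in>A. poly2 Q t (g t) \<noteq> 0)"
    unfolding eventually_nhds_metric by (auto simp: dist_commute)
  have B: "ball x e \<subseteq> I" using e(2) by blast
  have "poly2 P t (g t) = 0 \<and> poly2 (pderiv P) t (g t) \<noteq> 0" if t: "t \<in> ball x e" for t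
  proof
    obtain Q where "Q \<in> prime_factors F" "poly2 Q t (g t) = 0"
      using prime_factor_vanishing_on_graph B t by blast
    then show "poly2 P t (g t) = 0" using e(2)[OF t] unfolding A_def by blast
    show "poly2 (pderiv P) t (g t) \<noteq> 0" using e(2)[OF t] unfolding A_def by blast
  qed
  then have "nonsingular_branch P g (ball x e)"
    using differentiable_on_subset[OF differentiable_g B] unfolding nonsingular_branch_def by simp
  then show ?thesis using that e(1) B by blast
qed

lemma nonsingular_branch_at_regular_point:
  assumes x: "x \<in> I" "x \<notin> exceptional_points"
  obtains P e where "nonsingular_branch P g (ball x e)" "e > 0" "ball x e \<subseteq> I"
    "P dvd pderiv_x P \<or> poly2 (pderiv_x P) x (g x) \<noteq> 0"
    "P dvd implicit_deriv2_numer P \<or> poly2 (implicit_deriv2_numer P) x (g x) \<noteq> 0"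
proof -
  obtain P where P: "P \<in> prime_factors F" "poly2 P x (g x) = 0"
    using prime_factor_vanishing_on_graph[OF x(1)] by blast
  have regular: "P dvd Q \<or> poly2 Q x (g x) \<noteq> 0" if "Q \<in> companions P" for Q
    using x(2) P that unfolding exceptional_points_def by blast
  have "\<not> P dvd pderiv P"
    using not_dvd_pderiv degree_factor_vanishing_on_graph[OF in_prime_factors_imp_dvd[OF P(1)] x(1) P(2)] .
  then have "poly2 (pderiv P) x (g x) \<noteq> 0" using regular unfolding companions_def by blast
  moreover have "\<not> P dvd Q" if Q: "Q \<in> prime_factors F - {P}" for Q
    using Q primes_dvd_imp_eq[OF in_prime_factors_imp_prime[OF P(1)] in_prime_factors_imp_prime[of Q F]]
    by auto
  then have "\<forall>Q\<in>prime_factors F - {P}. poly2 Q x (g x) \<noteq> 0"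
    using regular unfolding companions_def by blast
  ultimately obtain e where "e > 0" "ball x e \<subseteq> I" "nonsingular_branch P g (ball x e)"
    using nonsingular_branch_near[OF x(1)] by blast
  then show ?thesis using that regular unfolding companions_def by blast
qed

theorem finite_inflection_or_local_min_points:
  "finite {x \<in> I. inflection_point g I x \<or> local_min_point g I x}"
proof (rule finite_subset[OF _ finite_exceptional_points], rule subsetI, rule ccontr)
  fix x assume "x \<in> {x \<in> I. inflection_point g I x \<or> local_min_point g I x}" "x \<notin> exceptional_points"
  then obtain P e where "nonsingular_branch P g (ball x e)" "e > 0" "ball x e \<subseteq> I"
      "P dvd pderiv_x P \<or> poly2 (pderiv_x P) x (g x) \<noteq> 0"
      "P dvd implicit_deriv2_numer P \<or> poly2 (implicit_deriv2_numer P) x (g x) \<noteq> 0"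
      "inflection_point g I x \<or> local_min_point g I x"
    using nonsingular_branch_at_regular_point by blast
  then show False using not_inflection_point not_local_min_point by blast
qed

end

theorem corollary2p2:
  fixes c :: "nat \<Rightarrow> nat \<Rightarrow> real" and n :: nat
    and x0 y0 a b :: real and I J :: "real set" and g :: "real \<Rightarrow> real"
  defines "f \<equiv> bipoly_eval c n"
  assumes fp: "f x0 y0 = 0"
    and fy: "deriv (\<lambda>y. f x0 y) y0 \<noteq> 0"
    and I: "open I" "is_interval I" "x0 \<in> I"
    and J: "open J" "is_interval J" "y0 \<in> J"
    and gmap: "\<forall>x\<in>I. g x \<in> J"
    and gdiff: "g differentiable_on I"
    and g0: "g x0 = y0"
    and graph: "{(x, y). x \<in> I \<and> y \<in> J \<and> f x y = 0} = {(x, g x) | x. x \<in> I}"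
    and ab: "{a..b} \<subseteq> I"
    and nonlin: "\<not> (\<exists>m k. \<forall>x\<in>I. g x = m * x + k)"
  shows "finite {x \<in> {a..b}. inflection_point g I x}
       \<and> finite {x \<in> {a..b}. local_min_point g I x}"
proof -
  have f: "f = poly2 (bipoly c n)" unfolding f_def by (simp add: bipoly_eval_eq_poly2 fun_eq_iff)
  have "bipoly c n \<noteq> 0" using fy unfolding f by auto
  moreover have "poly2 (bipoly c n) x (g x) = 0" if "x \<in> I" for x
  proof -
    have "(x, g x) \<in> {(x, y). x \<in> I \<and> y \<in> J \<and> f x y = 0}" unfolding graph using that by blast
    then show ?thesis by (simp add: f)
  qed
  moreover have "y = g x" if "x \<in> I" "y \<in> J" "poly2 (bipoly c n) x y = 0" for x y
  proof -
    have "(x, y) \<in> {(x, g x) | x. x \<in> I}" unfolding graph[symmetric] using that by (simp add: f)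
    then show ?thesis by blast
  qed
  ultimately interpret polynomial_graph "bipoly c n" I J g
    using I J gmap gdiff nonlin by unfold_locales auto
  have "{x \<in> {a..b}. inflection_point g I x} \<union> {x \<in> {a..b}. local_min_point g I x}
      \<subseteq> {x \<in> I. inflection_point g I x \<or> local_min_point g I x}"
    using ab by auto
  then show ?thesis using finite_inflection_or_local_min_points finite_subset by blast
qed

end
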